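(* Let \[ A = \begin{bmatrix} 0 & 1 & -1 & 1 \\ 1 & 0 & 1 & 0 \\ 1 & 1 & 0 & 0 \end{bmatrix}. \] Then $A$ is totally unimodular, but its $2$-fold $I$-sum \[ I\text{-sum}_2(A) = \begin{bmatrix} I & I \\ A & 0 \\ 0 & A \end{bmatrix} \] (a $10 \times 8$ matrix, where $I$ is the $4\times 4$ identity matrix) is not totally unimodular: the $6\times 6$ submatrix $S$ formed by rows $1,4,5,7,8,9$ and columns $1,2,4,5,7,8$ of $I\text{-sum}_2(A)$ satisfies $\det S = -2$.
   Context: A matrix is totally unimodular if each of its square submatrices has determinant in $\{0,\pm 1\}$. For an integer $N \geq 1$, the $N$-fold $I$-sum of an $m \times n$ matrix $A$ is the $(mN+n) \times nN$ matrix \[ I\text{-sum}_N(A) := \begin{bmatrix} I & I & \cdots & I \\ A & & & \\ & A & & \\ & & \ddots & \\ & & & A \end{bmatrix}, \] where $I$ is the $n \times n$ identity matrix, $N$ copies of which are included in the top block row, and unspecified entries are zero. *)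

theory Defs
  imports "Jordan_Normal_Form.Determinant" "Jordan_Normal_Form.DL_Submatrix"
begin

(* A matrix is totally unimodular if every square submatrix has determinant in {0,1,-1}.
   Submatrices are given by sets of row indices I and column indices J (kept in increasing order). *)
definition totally_unimodular :: "int mat \<Rightarrow> bool" where
  "totally_unimodular A \<longleftrightarrow>
     (\<forall>I J. I \<subseteq> {..<dim_row A} \<longrightarrow> J \<subseteq> {..<dim_col A} \<longrightarrow> card I = card J \<longrightarrow>
        det (submatrix A I J) \<in> {0, 1, -1})"

(* N-fold I-sum of an m x n matrix A: the (m*N+n) x (n*N) matrix
   [ I I ... I ; A 0 ... 0 ; 0 A ... 0 ; ... ; 0 ... 0 A ] (0-based indices). *)
definition I_sum :: "nat \<Rightarrow> int mat \<Rightarrow> int mat" where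
  "I_sum N A = (let m = dim_row A; n = dim_col A in
     mat (m * N + n) (n * N) (\<lambda>(i, j).
       if i < n then (if j mod n = i then 1 else 0)
       else (if j div n = (i - n) div m then A $$ ((i - n) mod m, j mod n) else 0)))"

definition A16 :: "int mat" where
  "A16 = mat_of_rows_list 4 [[0, 1, -1, 1], [1, 0, 1, 0], [1, 1, 0, 0]]"

end

theory Submission
  imports Defs
begin

(* A submatrix of a matrix given by its rows, taken at sorted index lists, is again given by
   rows, and its determinant evaluates symbolically by cofactor expansion along the first
   column. Enumerating all pairs of index lists (subsequences of [0..<m] and [0..<n]) thus
   decides total unimodularity of A16; the violating minor of the I-sum is evaluated the
   same way. *)

lemma pick_set_sorted:
  assumes "sorted_wrt (<) xs" "k < length xs"
  shows "pick (set xs) k = xs ! k"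
proof -
  have "{a \<in> set xs. a < xs ! k} = set (take k xs)"
  proof (intro equalityI subsetI)
    fix a assume "a \<in> {a \<in> set xs. a < xs ! k}"
    then obtain i where "i < length xs" "a = xs ! i" "xs ! i < xs ! k"
      by (auto simp: in_set_conv_nth)
    moreover have "i < k"
      using calculation assms by (metis linorder_neqE_nat order.asym sorted_wrt_iff_nth_less)
    ultimately show "a \<in> set (take k xs)"
      using assms by (auto simp: in_set_conv_nth)
  next
    fix a assume a: "a \<in> set (take k xs)"
    then obtain i where "i < k" "a = xs ! i"
      using assms by (auto simp: in_set_conv_nth)
    then show "a \<in> {a \<in> set xs. a < xs ! k}"
      using a assms set_take_subset by (fastforce simp: sorted_wrt_iff_nth_less)
  qed
  then have "card {a \<in> set xs. a < xs ! k} = k"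
    using assms by (simp add: distinct_card strict_sorted_iff min_def)
  then show ?thesis
    using pick_card_in_set[of "xs ! k" "set xs"] assms by simp
qed

lemma submatrix_mat_of_rows_list:
  assumes "sorted_wrt (<) xs" "sorted_wrt (<) ys"
    and "\<forall>i\<in>set xs. i < length L" "\<forall>j\<in>set ys. j < n"
  shows "submatrix (mat_of_rows_list n L) (set xs) (set ys) =
     mat_of_rows_list (length ys) (map (\<lambda>i. map (\<lambda>j. L ! i ! j) ys) xs)"
proof -
  have "distinct xs" "distinct ys"
    using assms by (auto simp: strict_sorted_iff)
  moreover have "{i. i < length L \<and> i \<in> set xs} = set xs" "{j. j < n \<and> j \<in> set ys} = set ys"
    using assms by auto
  ultimately show ?thesis
    unfolding submatrix_def mat_of_rows_list_def
    by (intro eq_matI) (auto simp: distinct_card pick_set_sorted assms)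
qed

lemma det_mat_of_rows_list_0: "det (mat_of_rows_list 0 []) = 1"
  by (simp add: mat_of_rows_list_def det_def)

(* The case split on zero entries lets the simplifier skip the minors that do not contribute. *)
lemma det_mat_of_rows_list_Suc:
  assumes "length L = Suc n" "\<forall>r\<in>set L. length r = Suc n"
  shows "det (mat_of_rows_list (Suc n) L) =
    (\<Sum>i\<leftarrow>[0..<Suc n]. if L ! i ! 0 = 0 then 0 else
       L ! i ! 0 * (-1) ^ i * det (mat_of_rows_list n (map tl (take i L @ drop (Suc i) L))))"
proof -
  let ?A = "mat_of_rows_list (Suc n) L"
  have minor: "mat_delete ?A i 0 = mat_of_rows_list n (map tl (take i L @ drop (Suc i) L))"
    if "i < Suc n" for i
  proof (rule eq_matI)
    fix a b assume "a < dim_row (mat_of_rows_list n (map tl (take i L @ drop (Suc i) L)))"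
      "b < dim_col (mat_of_rows_list n (map tl (take i L @ drop (Suc i) L)))"
    then have ab: "a < n" "b < n"
      using assms that by (auto simp: mat_of_rows_list_def min_def)
    have "length (L ! (if a < i then a else Suc a)) = Suc n"
      using assms ab that by (intro assms(2)[rule_format] nth_mem) auto
    then show "mat_delete ?A i 0 $$ (a, b) =
        mat_of_rows_list n (map tl (take i L @ drop (Suc i) L)) $$ (a, b)"
      using ab that assms
      by (auto simp: mat_of_rows_list_def mat_delete_def insert_index_def nth_append nth_tl min_def)
  qed (use assms that in \<open>auto simp: mat_of_rows_list_def min_def\<close>)
  have entry: "?A $$ (i, 0) = L ! i ! 0" if "i < Suc n" for i
    using assms that by (simp add: mat_of_rows_list_def)
  have "det ?A = (\<Sum>i<Suc n. ?A $$ (i, 0) * cofactor ?A i 0)"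
    using assms by (intro laplace_expansion_column) (auto simp: mat_of_rows_list_def)
  also have "\<dots> = (\<Sum>i\<leftarrow>[0..<Suc n]. if L ! i ! 0 = 0 then 0 else
       L ! i ! 0 * (-1) ^ i * det (mat_of_rows_list n (map tl (take i L @ drop (Suc i) L))))"
    unfolding sum_list_distinct_conv_sum_set[OF distinct_upt] set_upt atLeast0LessThan
    using assms by (intro sum.cong) (auto simp: cofactor_def minor entry)
  finally show ?thesis .
qed

lemma sorted_wrt_subseqs:
  "ys \<in> set (subseqs xs) \<Longrightarrow> sorted_wrt R xs \<Longrightarrow> sorted_wrt R ys"
proof (induction xs arbitrary: ys)
  case (Cons x xs)
  have "set zs \<subseteq> set xs" if "zs \<in> set (subseqs xs)" for zs
    using that subseqs_powset[of xs] by blast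
  with Cons show ?case
    by (fastforce simp: Let_def)
qed simp

lemma not_totally_unimodularI:
  assumes "I \<subseteq> {..<dim_row A}" "J \<subseteq> {..<dim_col A}" "card I = card J"
    and "det (submatrix A I J) \<notin> {0, 1, -1}"
  shows "\<not> totally_unimodular A"
  using assms unfolding totally_unimodular_def by blast

lemma totally_unimodular_mat_of_rows_listI:
  assumes "\<forall>xs\<in>set (subseqs [0..<length L]). \<forall>ys\<in>set (subseqs [0..<n]). length xs = length ys \<longrightarrow>
     det (mat_of_rows_list (length ys) (map (\<lambda>i. map (\<lambda>j. L ! i ! j) ys) xs)) \<in> {0, 1, -1}"
  shows "totally_unimodular (mat_of_rows_list n L)"
  unfolding totally_unimodular_def
proof (intro allI impI)
  fix I J
  assume I: "I \<subseteq> {..<dim_row (mat_of_rows_list n L)}"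
    and J: "J \<subseteq> {..<dim_col (mat_of_rows_list n L)}" and card: "card I = card J"
  obtain xs where xs: "xs \<in> set (subseqs [0..<length L])" "I = set xs"
    using subset_subseqs[of I "[0..<length L]"] I by (auto simp: mat_of_rows_list_def lessThan_atLeast0)
  obtain ys where ys: "ys \<in> set (subseqs [0..<n])" "J = set ys"
    using subset_subseqs[of J "[0..<n]"] J by (auto simp: mat_of_rows_list_def lessThan_atLeast0)
  have sorted: "sorted_wrt (<) xs" "sorted_wrt (<) ys"
    using xs ys by (auto intro: sorted_wrt_subseqs)
  have "set xs \<subseteq> {..<length L}" "set ys \<subseteq> {..<n}"
    using xs ys I J by (auto simp: mat_of_rows_list_def)
  then have "submatrix (mat_of_rows_list n L) I J =
      mat_of_rows_list (length ys) (map (\<lambda>i. map (\<lambda>j. L ! i ! j) ys) xs)"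
    unfolding xs ys using sorted by (intro submatrix_mat_of_rows_list) auto
  moreover have "length xs = length ys"
    using card sorted xs ys by (simp add: distinct_card strict_sorted_iff)
  ultimately show "det (submatrix (mat_of_rows_list n L) I J) \<in> {0, 1, -1}"
    using assms xs ys by simp
qed

lemma dim_row_I_sum: "dim_row (I_sum N A) = dim_row A * N + dim_col A"
  by (simp add: I_sum_def Let_def)

lemma dim_col_I_sum: "dim_col (I_sum N A) = dim_col A * N"
  by (simp add: I_sum_def Let_def)

lemmas det_mat_of_rows_list_simps =
  det_mat_of_rows_list_Suc det_mat_of_rows_list_0 numeral_eq_Suc upt_rec

lemma totally_unimodular_A16: "totally_unimodular A16"
  unfolding A16_def
  by (rule totally_unimodular_mat_of_rows_listI) (simp add: det_mat_of_rows_list_simps)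

lemma I_sum_2_A16: "I_sum 2 A16 = mat_of_rows_list 8
  [[1, 0, 0, 0, 1, 0, 0, 0],
   [0, 1, 0, 0, 0, 1, 0, 0],
   [0, 0, 1, 0, 0, 0, 1, 0],
   [0, 0, 0, 1, 0, 0, 0, 1],
   [0, 1, -1, 1, 0, 0, 0, 0],
   [1, 0, 1, 0, 0, 0, 0, 0],
   [1, 1, 0, 0, 0, 0, 0, 0],
   [0, 0, 0, 0, 0, 1, -1, 1],
   [0, 0, 0, 0, 1, 0, 1, 0],
   [0, 0, 0, 0, 1, 1, 0, 0]]" (is "_ = mat_of_rows_list 8 ?L")
proof (rule eq_matI)
  have "list_all (\<lambda>i. list_all (\<lambda>j. I_sum 2 A16 $$ (i, j) = ?L ! i ! j) [0..<8]) [0..<10]"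
    by (simp add: I_sum_def A16_def mat_of_rows_list_def upt_rec)
  then show "I_sum 2 A16 $$ (i, j) = mat_of_rows_list 8 ?L $$ (i, j)"
    if "i < dim_row (mat_of_rows_list 8 ?L)" "j < dim_col (mat_of_rows_list 8 ?L)" for i j
    using that by (simp add: list_all_iff mat_of_rows_list_def)
qed (simp_all add: dim_row_I_sum dim_col_I_sum A16_def mat_of_rows_list_def)

lemma det_I_sum_2_A16_submatrix:
  "det (submatrix (I_sum 2 A16) {0, 3, 4, 6, 7, 8} {0, 1, 3, 4, 6, 7}) = -2"
proof -
  have "{0, 3, 4, 6, 7, 8} = set [0, 3, 4, 6, 7, 8 :: nat]"
    and "{0, 1, 3, 4, 6, 7} = set [0, 1, 3, 4, 6, 7 :: nat]"
    by simp_all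
  then show ?thesis
    unfolding I_sum_2_A16
    by (simp only:, subst submatrix_mat_of_rows_list) (simp_all add: det_mat_of_rows_list_simps)
qed

theorem mainTheorem16:
  shows "totally_unimodular A16 \<and> \<not> totally_unimodular (I_sum 2 A16) \<and>
         dim_row (I_sum 2 A16) = 10 \<and> dim_col (I_sum 2 A16) = 8 \<and>
         det (submatrix (I_sum 2 A16) {0, 3, 4, 6, 7, 8} {0, 1, 3, 4, 6, 7}) = -2"
proof -
  have dims: "dim_row (I_sum 2 A16) = 10" "dim_col (I_sum 2 A16) = 8"
    by (simp_all add: dim_row_I_sum dim_col_I_sum A16_def mat_of_rows_list_def)
  then have "\<not> totally_unimodular (I_sum 2 A16)"
    by (intro not_totally_unimodularI[of "{0, 3, 4, 6, 7, 8}" _ "{0, 1, 3, 4, 6, 7}"])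
      (use det_I_sum_2_A16_submatrix in simp_all)
  with dims show ?thesis
    using totally_unimodular_A16 det_I_sum_2_A16_submatrix by simp
qed

end
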